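(* Let $(X,u)$ and $(Y,v)$ be Čech closure spaces, let $Y^X$ be the set of all continuous maps $(X,u)\to(Y,v)$, and let $\sigma$ be a Čech closure operator on $Y^X$. Then: (1) $\sigma$ is proper if and only if for every topological space $Z$ having at most one non-isolated point and every continuous $g:Z\times(X,u)\to(Y,v)$, the map $g^*:Z\to(Y^X,\sigma)$ is continuous; (2) $\sigma$ is admissible if and only if for every topological space $Z$ having at most one non-isolated point and every $g:Z\times X\to Y$ with $g^*(Z)\subset Y^X$ such that $g^*:Z\to(Y^X,\sigma)$ is continuous, the map $g:Z\times(X,u)\to(Y,v)$ is continuous.
   Context: A Čech closure space $(X,u)$ is a set $X$ with an operator $u:\mathcal P(X)\to\mathcal P(X)$ satisfying $u(\emptyset)=\emptyset$, $A\subset u(A)$, and $u(A\cup B)=u(A)\cup u(B)$. The interior is $\mathrm{int}_u A=X\setminus u(X\setminus A)$; $U$ is a neighbourhood of $x$ if $x\in\mathrm{int}_uU$. Topological spaces are regarded as closure spaces via their Kuratowski closure. A map $f:(X,u)\to(Y,v)$ is continuous if $f(u(A))\subset v(f(A))$ for all $A$. The product $(Z,w)\times(X,u)$ is $Z\times X$ with the closure operator for which the sets $W\times U$ ($W$ a neighbourhood of $z$, $U$ of $x$) form a neighbourhood base at $(z,x)$. For $g:Z\times X\to Y$, $g^*(z)(x)=g(z,x)$. A closure operator $\sigma$ on $Y^X$ is proper if for every closure space $(Z,w)$, continuity of $g:(Z,w)\times(X,u)\to(Y,v)$ implies continuity of $g^*:(Z,w)\to(Y^X,\sigma)$; it is admissible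 if for every closure space $(Z,w)$ and every $g:Z\times X\to Y$ with $g^*(Z)\subset Y^X$, continuity of $g^*:(Z,w)\to(Y^X,\sigma)$ implies continuity of $g$. *)

theory Defs
  imports "HOL-Analysis.Analysis" "HOL-Library.FuncSet"
begin

definition cech_closure :: "'a set \<Rightarrow> ('a set \<Rightarrow> 'a set) \<Rightarrow> bool" where
  "cech_closure S u \<longleftrightarrow>
     u {} = {} \<and>
     (\<forall>A. A \<subseteq> S \<longrightarrow> A \<subseteq> u A \<and> u A \<subseteq> S) \<and>
     (\<forall>A B. A \<subseteq> S \<longrightarrow> B \<subseteq> S \<longrightarrow> u (A \<union> B) = u A \<union> u B)"

definition cl_interior :: "'a set \<Rightarrow> ('a set \<Rightarrow> 'a set) \<Rightarrow> 'a set \<Rightarrow> 'a set" where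
  "cl_interior S u A = S - u (S - A)"

definition cl_nbhd :: "'a set \<Rightarrow> ('a set \<Rightarrow> 'a set) \<Rightarrow> 'a \<Rightarrow> 'a set \<Rightarrow> bool" where
  "cl_nbhd S u x U \<longleftrightarrow> U \<subseteq> S \<and> x \<in> cl_interior S u U"

definition cl_cont :: "'a set \<Rightarrow> ('a set \<Rightarrow> 'a set) \<Rightarrow> 'b set \<Rightarrow> ('b set \<Rightarrow> 'b set) \<Rightarrow> ('a \<Rightarrow> 'b) \<Rightarrow> bool" where
  "cl_cont S u T v f \<longleftrightarrow> f ` S \<subseteq> T \<and> (\<forall>A. A \<subseteq> S \<longrightarrow> f ` (u A) \<subseteq> v (f ` A))"

text \<open>Product closure: the closure operator on Z \<times> X for which the sets W \<times> U
  (W a neighbourhood of z, U a neighbourhood of x) form a neighbourhood base at (z,x).\<close>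
definition prod_cl :: "'z set \<Rightarrow> ('z set \<Rightarrow> 'z set) \<Rightarrow> 'x set \<Rightarrow> ('x set \<Rightarrow> 'x set)
    \<Rightarrow> ('z \<times> 'x) set \<Rightarrow> ('z \<times> 'x) set" where
  "prod_cl Z w X u A = {(z, x). z \<in> Z \<and> x \<in> X \<and>
      (\<forall>W U. cl_nbhd Z w z W \<longrightarrow> cl_nbhd X u x U \<longrightarrow> (W \<times> U) \<inter> A \<noteq> {})}"

text \<open>Y^X: the set of continuous maps (X,u) \<rightarrow> (Y,v), represented extensionally
  (value undefined outside X).\<close>
definition cont_maps :: "'x set \<Rightarrow> ('x set \<Rightarrow> 'x set) \<Rightarrow> 'y set \<Rightarrow> ('y set \<Rightarrow> 'y set) \<Rightarrow> ('x \<Rightarrow> 'y) set" where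
  "cont_maps X u Y v = {f. f \<in> extensional X \<and> cl_cont X u Y v f}"

definition gstar :: "'x set \<Rightarrow> ('z \<times> 'x \<Rightarrow> 'y) \<Rightarrow> 'z \<Rightarrow> ('x \<Rightarrow> 'y)" where
  "gstar X g z = restrict (\<lambda>x. g (z, x)) X"

text \<open>Properness and admissibility; the closure spaces (Z,w) range over carriers in the type 'z.\<close>
definition proper :: "'z itself \<Rightarrow> 'x set \<Rightarrow> ('x set \<Rightarrow> 'x set) \<Rightarrow> 'y set \<Rightarrow> ('y set \<Rightarrow> 'y set)
    \<Rightarrow> (('x \<Rightarrow> 'y) set \<Rightarrow> ('x \<Rightarrow> 'y) set) \<Rightarrow> bool" where
  "proper _ X u Y v \<sigma> \<longleftrightarrow>
    (\<forall>(Z::'z set) w (g::'z \<times> 'x \<Rightarrow> 'y). cech_closure Z w \<longrightarrow>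
       cl_cont (Z \<times> X) (prod_cl Z w X u) Y v g \<longrightarrow>
       cl_cont Z w (cont_maps X u Y v) \<sigma> (gstar X g))"

definition admissible :: "'z itself \<Rightarrow> 'x set \<Rightarrow> ('x set \<Rightarrow> 'x set) \<Rightarrow> 'y set \<Rightarrow> ('y set \<Rightarrow> 'y set)
    \<Rightarrow> (('x \<Rightarrow> 'y) set \<Rightarrow> ('x \<Rightarrow> 'y) set) \<Rightarrow> bool" where
  "admissible _ X u Y v \<sigma> \<longleftrightarrow>
    (\<forall>(Z::'z set) w (g::'z \<times> 'x \<Rightarrow> 'y). cech_closure Z w \<longrightarrow>
       gstar X g ` Z \<subseteq> cont_maps X u Y v \<longrightarrow>
       cl_cont Z w (cont_maps X u Y v) \<sigma> (gstar X g) \<longrightarrow>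
       cl_cont (Z \<times> X) (prod_cl Z w X u) Y v g)"

definition at_most_one_nonisolated :: "'z topology \<Rightarrow> bool" where
  "at_most_one_nonisolated Z \<longleftrightarrow>
    (\<forall>a\<in>topspace Z. \<forall>b\<in>topspace Z. \<not> openin Z {a} \<longrightarrow> \<not> openin Z {b} \<longrightarrow> a = b)"

text \<open>The test conditions of Corollary 3, with Z a topological space regarded as the
  closure space (topspace Z, closure_of Z).\<close>
definition proper_test :: "'z itself \<Rightarrow> 'x set \<Rightarrow> ('x set \<Rightarrow> 'x set) \<Rightarrow> 'y set \<Rightarrow> ('y set \<Rightarrow> 'y set)
    \<Rightarrow> (('x \<Rightarrow> 'y) set \<Rightarrow> ('x \<Rightarrow> 'y) set) \<Rightarrow> bool" where
  "proper_test _ X u Y v \<sigma> \<longleftrightarrow>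
    (\<forall>(Z::'z topology) (g::'z \<times> 'x \<Rightarrow> 'y). at_most_one_nonisolated Z \<longrightarrow>
       cl_cont (topspace Z \<times> X) (prod_cl (topspace Z) ((closure_of) Z) X u) Y v g \<longrightarrow>
       cl_cont (topspace Z) ((closure_of) Z) (cont_maps X u Y v) \<sigma> (gstar X g))"

definition admissible_test :: "'z itself \<Rightarrow> 'x set \<Rightarrow> ('x set \<Rightarrow> 'x set) \<Rightarrow> 'y set \<Rightarrow> ('y set \<Rightarrow> 'y set)
    \<Rightarrow> (('x \<Rightarrow> 'y) set \<Rightarrow> ('x \<Rightarrow> 'y) set) \<Rightarrow> bool" where
  "admissible_test _ X u Y v \<sigma> \<longleftrightarrow>
    (\<forall>(Z::'z topology) (g::'z \<times> 'x \<Rightarrow> 'y). at_most_one_nonisolated Z \<longrightarrow>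
       gstar X g ` topspace Z \<subseteq> cont_maps X u Y v \<longrightarrow>
       cl_cont (topspace Z) ((closure_of) Z) (cont_maps X u Y v) \<sigma> (gstar X g) \<longrightarrow>
       cl_cont (topspace Z \<times> X) (prod_cl (topspace Z) ((closure_of) Z) X u) Y v g)"

end

theory Submission
  imports Defs
begin

text \<open>
  The implications from properness and admissibility to the test conditions are specialisations,
  since every topological space is a Cech closure space. For the converses, fix a closure space
  \<open>(Z, w)\<close>, a point \<open>z \<in> Z\<close> and \<open>h = g\<^sup>*\<close>. Pushing the neighbourhood filter of \<open>z\<close> forward
  along \<open>h\<close> makes \<open>h(Z)\<close>, with an extra point \<open>None\<close> standing for \<open>z\<close>, a topological space
  \<open>T\<^sub>z\<close> in which all points but \<open>None\<close> are isolated; its points lie in the test type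
  \<open>('x \<Rightarrow> 'y) option\<close>. The map \<open>T\<^sub>z \<rightarrow> Y\<^sup>X\<close> sending \<open>None\<close> to \<open>h z\<close> and fixing the other
  points is continuous iff \<open>h\<close> is continuous at \<open>z\<close>, and the corresponding evaluation
  \<open>T\<^sub>z \<times> X \<rightarrow> Y\<close> is continuous iff \<open>g\<close> is continuous at every point \<open>(z, x)\<close>. Since continuity
  is a pointwise property, testing with the spaces \<open>T\<^sub>z\<close> suffices.
\<close>

section \<open>Cech closure spaces and neighbourhood filters\<close>

lemma cech_closure_extensive: "cech_closure S u \<Longrightarrow> A \<subseteq> S \<Longrightarrow> A \<subseteq> u A"
  unfolding cech_closure_def by blast

lemma cech_closure_subset: "cech_closure S u \<Longrightarrow> A \<subseteq> S \<Longrightarrow> u A \<subseteq> S"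
  unfolding cech_closure_def by blast

lemma cech_closure_mono: "cech_closure S u \<Longrightarrow> A \<subseteq> B \<Longrightarrow> B \<subseteq> S \<Longrightarrow> u A \<subseteq> u B"
  unfolding cech_closure_def by (metis Un_absorb1 Un_upper1 order_trans)

lemma cech_closure_topology: "cech_closure (topspace T) ((closure_of) T)"
  unfolding cech_closure_def by (auto simp: closure_of_subset closure_of_subset_topspace)

lemma cl_nbhd_carrier: "cech_closure S u \<Longrightarrow> x \<in> S \<Longrightarrow> cl_nbhd S u x S"
  unfolding cl_nbhd_def cl_interior_def cech_closure_def by simp

lemma cl_nbhd_Int:
  assumes "cech_closure S u" "cl_nbhd S u x U" "cl_nbhd S u x V"
  shows "cl_nbhd S u x (U \<inter> V)"
proof -
  have "S - (U \<inter> V) = (S - U) \<union> (S - V)" by blast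
  then have "u (S - (U \<inter> V)) = u (S - U) \<union> u (S - V)"
    using assms(1) unfolding cech_closure_def by (metis Diff_subset)
  then show ?thesis using assms(2,3) unfolding cl_nbhd_def cl_interior_def by auto
qed

lemma mem_cl_nbhd: "cech_closure S u \<Longrightarrow> cl_nbhd S u x U \<Longrightarrow> x \<in> U"
  unfolding cl_nbhd_def cl_interior_def using cech_closure_extensive[of S u "S - U"] by blast

lemma in_cech_closure_iff_nbhds:
  assumes "cech_closure S u" "A \<subseteq> S"
  shows "x \<in> u A \<longleftrightarrow> x \<in> S \<and> (\<forall>U. cl_nbhd S u x U \<longrightarrow> U \<inter> A \<noteq> {})"
proof (intro iffI conjI allI impI)
  assume x: "x \<in> u A"
  then show "x \<in> S" using cech_closure_subset[OF assms] by blast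
  fix U assume U: "cl_nbhd S u x U"
  show "U \<inter> A \<noteq> {}"
  proof
    assume "U \<inter> A = {}"
    then have "u A \<subseteq> u (S - U)" using cech_closure_mono[OF assms(1), of A "S - U"] assms(2) by blast
    with x U show False unfolding cl_nbhd_def cl_interior_def by blast
  qed
next
  assume x: "x \<in> S \<and> (\<forall>U. cl_nbhd S u x U \<longrightarrow> U \<inter> A \<noteq> {})"
  have "x \<notin> u A \<Longrightarrow> cl_nbhd S u x (S - A)"
    using x assms(2) unfolding cl_nbhd_def cl_interior_def by (simp add: double_diff)
  with x show "x \<in> u A" by blast
qed

definition cl_nhds :: "'a set \<Rightarrow> ('a set \<Rightarrow> 'a set) \<Rightarrow> 'a \<Rightarrow> 'a filter" where
  "cl_nhds S u x = (INF U\<in>{U. cl_nbhd S u x U}. principal U)"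

lemma eventually_cl_nhds:
  assumes "cech_closure S u" "x \<in> S"
  shows "eventually P (cl_nhds S u x) \<longleftrightarrow> (\<exists>U. cl_nbhd S u x U \<and> (\<forall>y\<in>U. P y))"
  unfolding cl_nhds_def
proof (subst eventually_INF_base)
  show "{U. cl_nbhd S u x U} \<noteq> {}" using cl_nbhd_carrier[OF assms] by blast
qed (use cl_nbhd_Int[OF assms(1)] in \<open>auto simp: eventually_principal\<close>)

lemma eventually_in_carrier_cl_nhds:
  assumes "cech_closure S u" "x \<in> S"
  shows "\<forall>\<^sub>F y in cl_nhds S u x. y \<in> S"
  unfolding eventually_cl_nhds[OF assms] using cl_nbhd_carrier[OF assms] by blast

lemma in_cech_closure_iff_frequently:
  assumes "cech_closure S u" "A \<subseteq> S" "x \<in> S"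
  shows "x \<in> u A \<longleftrightarrow> (\<exists>\<^sub>F y in cl_nhds S u x. y \<in> A)"
  unfolding in_cech_closure_iff_nbhds[OF assms(1,2)] frequently_def eventually_cl_nhds[OF assms(1,3)]
  using assms(3) by blast

section \<open>A filter on a set as a space with one non-isolated point\<close>

definition filter_space :: "'a set \<Rightarrow> 'a filter \<Rightarrow> 'a option topology" where
  "filter_space P F = topology (\<lambda>S. S \<subseteq> insert None (Some ` P) \<and>
     (None \<in> S \<longrightarrow> (\<forall>\<^sub>F p in F. p \<in> P \<longrightarrow> Some p \<in> S)))"

lemma openin_filter_space:
  "openin (filter_space P F) S \<longleftrightarrow>
     S \<subseteq> insert None (Some ` P) \<and> (None \<in> S \<longrightarrow> (\<forall>\<^sub>F p in F. p \<in> P \<longrightarrow> Some p \<in> S))"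
proof -
  define U where "U S \<longleftrightarrow> S \<subseteq> insert None (Some ` P) \<and>
     (None \<in> S \<longrightarrow> (\<forall>\<^sub>F p in F. p \<in> P \<longrightarrow> Some p \<in> S))" for S
  have "istopology U"
    unfolding istopology_def
  proof (intro conjI allI impI)
    fix S T assume S: "U S" and T: "U T"
    have "\<forall>\<^sub>F p in F. p \<in> P \<longrightarrow> Some p \<in> S \<inter> T" if "None \<in> S \<inter> T"
    proof -
      have "\<forall>\<^sub>F p in F. (p \<in> P \<longrightarrow> Some p \<in> S) \<and> (p \<in> P \<longrightarrow> Some p \<in> T)"
        using S T that unfolding U_def by (simp add: eventually_conj)
      then show ?thesis by (rule eventually_mono) blast
    qed
    with S T show "U (S \<inter> T)" unfolding U_def by blast
  next
    fix \<K> assume \<K>: "\<forall>K\<in>\<K>. U K"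
    have "\<forall>\<^sub>F p in F. p \<in> P \<longrightarrow> Some p \<in> \<Union>\<K>" if "None \<in> K" "K \<in> \<K>" for K
    proof -
      have "\<forall>\<^sub>F p in F. p \<in> P \<longrightarrow> Some p \<in> K" using \<K> that unfolding U_def by blast
      then show ?thesis by (rule eventually_mono) (use that in blast)
    qed
    with \<K> show "U (\<Union>\<K>)" unfolding U_def by blast
  qed
  then have "openin (filter_space P F) = U"
    unfolding filter_space_def U_def[abs_def] by simp
  then show ?thesis by (simp add: U_def)
qed

lemma topspace_filter_space: "topspace (filter_space P F) = insert None (Some ` P)"
proof (rule antisym)
  show "topspace (filter_space P F) \<subseteq> insert None (Some ` P)"
    unfolding topspace_def openin_filter_space by blast
  show "insert None (Some ` P) \<subseteq> topspace (filter_space P F)"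
    by (rule openin_subset) (simp add: openin_filter_space)
qed

lemma openin_filter_space_Some: "p \<in> P \<Longrightarrow> openin (filter_space P F) {Some p}"
  by (simp add: openin_filter_space)

lemma Some_in_closure_of_filter_space:
  "Some p \<in> filter_space P F closure_of S \<longleftrightarrow> p \<in> P \<and> Some p \<in> S"
  using openin_filter_space_Some[of p P F] unfolding in_closure_of topspace_filter_space by blast

lemma None_in_closure_of_filter_space:
  "None \<in> filter_space P F closure_of S \<longleftrightarrow> None \<in> S \<or> (\<exists>\<^sub>F p in F. p \<in> P \<and> Some p \<in> S)"
proof (cases "None \<in> S")
  case False
  have "(\<forall>V. None \<in> V \<and> openin (filter_space P F) V \<longrightarrow> (\<exists>q. q \<in> S \<and> q \<in> V)) \<longleftrightarrow>
        (\<exists>\<^sub>F p in F. p \<in> P \<and> Some p \<in> S)"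
  proof
    assume meets: "\<forall>V. None \<in> V \<and> openin (filter_space P F) V \<longrightarrow> (\<exists>q. q \<in> S \<and> q \<in> V)"
    show "\<exists>\<^sub>F p in F. p \<in> P \<and> Some p \<in> S"
    proof (rule ccontr)
      assume "\<not> (\<exists>\<^sub>F p in F. p \<in> P \<and> Some p \<in> S)"
      then have "\<forall>\<^sub>F p in F. p \<in> P \<longrightarrow> Some p \<in> insert None (Some ` {p \<in> P. Some p \<notin> S})"
        unfolding not_frequently by (rule eventually_mono) blast
      then have "openin (filter_space P F) (insert None (Some ` {p \<in> P. Some p \<notin> S}))"
        unfolding openin_filter_space by blast
      with meets False show False by blast
    qed
  next
    assume freq: "\<exists>\<^sub>F p in F. p \<in> P \<and> Some p \<in> S"
    show "\<forall>V. None \<in> V \<and> openin (filter_space P F) V \<longrightarrow> (\<exists>q. q \<in> S \<and> q \<in> V)"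
    proof safe
      fix V assume "None \<in> V" "openin (filter_space P F) V"
      then have "\<forall>\<^sub>F p in F. p \<in> P \<longrightarrow> Some p \<in> V" unfolding openin_filter_space by blast
      from frequently_eventually_frequently[OF freq this] show "\<exists>q. q \<in> S \<and> q \<in> V"
        by (auto dest: frequently_ex)
    qed
  qed
  then show ?thesis unfolding in_closure_of topspace_filter_space using False by simp
qed (unfold in_closure_of topspace_filter_space, blast)

lemma at_most_one_nonisolated_filter_space: "at_most_one_nonisolated (filter_space P F)"
  unfolding at_most_one_nonisolated_def topspace_filter_space
  by (metis imageE insertE openin_filter_space_Some)

lemma cl_nbhd_topology:
  "cl_nbhd (topspace T) ((closure_of) T) p N \<longleftrightarrow> N \<subseteq> topspace T \<and> p \<in> T interior_of N"
  unfolding cl_nbhd_def cl_interior_def interior_of_closure_of ..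

lemma cl_nbhd_None_filter_space:
  "cl_nbhd (topspace (filter_space P F)) ((closure_of) (filter_space P F)) None N \<longleftrightarrow>
     openin (filter_space P F) N \<and> None \<in> N"
proof
  assume "cl_nbhd (topspace (filter_space P F)) ((closure_of) (filter_space P F)) None N"
  then have N: "N \<subseteq> insert None (Some ` P)" and "None \<in> filter_space P F interior_of N"
    unfolding cl_nbhd_topology by (simp_all add: topspace_filter_space)
  then obtain V where V: "openin (filter_space P F) V" "None \<in> V" "V \<subseteq> N"
    unfolding interior_of_def by blast
  then have "\<forall>\<^sub>F p in F. p \<in> P \<longrightarrow> Some p \<in> V" unfolding openin_filter_space by blast
  then have "\<forall>\<^sub>F p in F. p \<in> P \<longrightarrow> Some p \<in> N" by (rule eventually_mono) (use V in blast)
  with N V show "openin (filter_space P F) N \<and> None \<in> N" unfolding openin_filter_space by blast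
next
  assume "openin (filter_space P F) N \<and> None \<in> N"
  then show "cl_nbhd (topspace (filter_space P F)) ((closure_of) (filter_space P F)) None N"
    unfolding cl_nbhd_topology by (simp add: interior_of_openin openin_subset)
qed

section \<open>Pointwise continuity\<close>

definition cl_cont_at ::
    "'a set \<Rightarrow> ('a set \<Rightarrow> 'a set) \<Rightarrow> ('b set \<Rightarrow> 'b set) \<Rightarrow> ('a \<Rightarrow> 'b) \<Rightarrow> 'a \<Rightarrow> bool" where
  "cl_cont_at S u v f x \<longleftrightarrow> (\<forall>A. A \<subseteq> S \<longrightarrow> x \<in> u A \<longrightarrow> f x \<in> v (f ` A))"

lemma cl_cont_iff_cl_cont_at:
  assumes "\<And>A. A \<subseteq> S \<Longrightarrow> u A \<subseteq> S"
  shows "cl_cont S u T v f \<longleftrightarrow> f ` S \<subseteq> T \<and> (\<forall>x\<in>S. cl_cont_at S u v f x)"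
proof -
  have "(\<forall>A. A \<subseteq> S \<longrightarrow> f ` u A \<subseteq> v (f ` A)) \<longleftrightarrow> (\<forall>x\<in>S. cl_cont_at S u v f x)"
  proof
    assume "\<forall>A. A \<subseteq> S \<longrightarrow> f ` u A \<subseteq> v (f ` A)"
    then show "\<forall>x\<in>S. cl_cont_at S u v f x" unfolding cl_cont_at_def by (meson image_subset_iff)
  next
    assume at: "\<forall>x\<in>S. cl_cont_at S u v f x"
    show "\<forall>A. A \<subseteq> S \<longrightarrow> f ` u A \<subseteq> v (f ` A)"
    proof (intro allI impI image_subsetI)
      fix A x assume "A \<subseteq> S" "x \<in> u A"
      moreover from this have "x \<in> S" using assms by blast
      ultimately show "f x \<in> v (f ` A)" using at unfolding cl_cont_at_def by blast
    qed
  qed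
  then show ?thesis unfolding cl_cont_def by blast
qed

lemma cech_cl_cont_iff_cl_cont_at:
  "cech_closure S u \<Longrightarrow> cl_cont S u T v f \<longleftrightarrow> f ` S \<subseteq> T \<and> (\<forall>x\<in>S. cl_cont_at S u v f x)"
  by (rule cl_cont_iff_cl_cont_at) (rule cech_closure_subset)

lemma cl_cont_cong:
  assumes "\<And>x. x \<in> S \<Longrightarrow> f x = f' x" and "\<And>A. A \<subseteq> S \<Longrightarrow> u A \<subseteq> S"
  shows "cl_cont S u T v f \<longleftrightarrow> cl_cont S u T v f'"
proof -
  have "f ` A = f' ` A" if "A \<subseteq> S" for A
    using assms(1) that by (simp add: subset_iff cong: image_cong)
  then show ?thesis unfolding cl_cont_def using assms(2) by (metis subset_refl)
qed

lemma mem_prod_cl: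
  "(z, x) \<in> prod_cl Z w X u A \<longleftrightarrow>
     z \<in> Z \<and> x \<in> X \<and> (\<forall>W U. cl_nbhd Z w z W \<longrightarrow> cl_nbhd X u x U \<longrightarrow> W \<times> U \<inter> A \<noteq> {})"
  by (simp add: prod_cl_def)

lemma prod_cl_subset: "prod_cl Z w X u A \<subseteq> Z \<times> X"
  unfolding prod_cl_def by auto

lemma cl_cont_prod_iff_cl_cont_at:
  "cl_cont (Z \<times> X) (prod_cl Z w X u) Y v g \<longleftrightarrow>
     g ` (Z \<times> X) \<subseteq> Y \<and> (\<forall>q\<in>Z \<times> X. cl_cont_at (Z \<times> X) (prod_cl Z w X u) v g q)"
  by (rule cl_cont_iff_cl_cont_at) (rule prod_cl_subset)

lemma gstar_apply: "x \<in> X \<Longrightarrow> gstar X g a x = g (a, x)"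
  by (simp add: gstar_def)

lemma eval_image_subset:
  assumes "\<phi> ` P \<subseteq> cont_maps X u Y v"
  shows "(\<lambda>(p, x). \<phi> p x) ` (P \<times> X) \<subseteq> Y"
proof clarify
  fix p x assume "p \<in> P" "x \<in> X"
  with assms have "\<phi> p ` X \<subseteq> Y" unfolding cont_maps_def cl_cont_def by blast
  with \<open>x \<in> X\<close> show "\<phi> p x \<in> Y" by blast
qed

lemma image_subset_if_gstar_image_subset:
  "gstar X g ` Z \<subseteq> cont_maps X u Y v \<Longrightarrow> g ` (Z \<times> X) \<subseteq> Y"
  using eval_image_subset[of "gstar X g" Z X u Y v] by (force simp: gstar_apply)

lemma gstar_in_cont_maps:
  assumes cZ: "cech_closure Z w" and cX: "cech_closure X u"
    and g: "cl_cont (Z \<times> X) (prod_cl Z w X u) Y v g" and a: "a \<in> Z"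
  shows "gstar X g a \<in> cont_maps X u Y v"
  unfolding cont_maps_def cl_cont_def
proof (intro CollectI conjI allI impI)
  show "gstar X g a \<in> extensional X" by (simp add: gstar_def)
  show "gstar X g a ` X \<subseteq> Y" using g a unfolding cl_cont_def by (auto simp: gstar_def)
  fix B assume B: "B \<subseteq> X"
  show "gstar X g a ` u B \<subseteq> v (gstar X g a ` B)"
  proof
    fix y assume "y \<in> gstar X g a ` u B"
    then obtain x where x: "x \<in> u B" "y = gstar X g a x" by blast
    have xX: "x \<in> X" using cech_closure_subset[OF cX B] x by blast
    have "(a, x) \<in> prod_cl Z w X u ({a} \<times> B)"
      unfolding mem_prod_cl
    proof (intro conjI allI impI a xX)
      fix W U assume W: "cl_nbhd Z w a W" and U: "cl_nbhd X u x U"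
      have "a \<in> W" using mem_cl_nbhd[OF cZ W] .
      moreover have "U \<inter> B \<noteq> {}" using in_cech_closure_iff_nbhds[OF cX B] x(1) U by blast
      ultimately show "W \<times> U \<inter> {a} \<times> B \<noteq> {}" by blast
    qed
    moreover have "{a} \<times> B \<subseteq> Z \<times> X" using a B by blast
    ultimately have "g (a, x) \<in> v (g ` ({a} \<times> B))" using g unfolding cl_cont_def by blast
    moreover have "g ` ({a} \<times> B) = gstar X g a ` B" using B by (force simp: gstar_apply)
    ultimately show "y \<in> v (gstar X g a ` B)" using x gstar_apply[OF xX, of g a] by simp
  qed
qed

lemma cl_cont_at_eval_isolated:
  assumes cX: "cech_closure X u" and cY: "cech_closure Y v"
    and p: "openin T {p}" "\<phi> p \<in> cont_maps X u Y v"
    and ev: "(\<lambda>(q, x). \<phi> q x) ` (topspace T \<times> X) \<subseteq> Y"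
  shows "cl_cont_at (topspace T \<times> X) (prod_cl (topspace T) ((closure_of) T) X u) v
           (\<lambda>(q, x). \<phi> q x) (p, x)"
  unfolding cl_cont_at_def
proof (intro allI impI)
  let ?ev = "\<lambda>(q, x). \<phi> q x"
  fix B assume B: "B \<subseteq> topspace T \<times> X" and px: "(p, x) \<in> prod_cl (topspace T) ((closure_of) T) X u B"
  define Bp where "Bp = {x'. (p, x') \<in> B}"
  have BpX: "Bp \<subseteq> X" using B unfolding Bp_def by blast
  have p_nbhd: "cl_nbhd (topspace T) ((closure_of) T) p {p}"
    using p(1) unfolding cl_nbhd_topology by (metis interior_of_openin openin_subset singletonI)
  have "x \<in> u Bp"
    unfolding in_cech_closure_iff_nbhds[OF cX BpX]
  proof (intro conjI allI impI)
    show "x \<in> X" using px unfolding mem_prod_cl by blast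
    fix U assume "cl_nbhd X u x U"
    with px p_nbhd have "{p} \<times> U \<inter> B \<noteq> {}" unfolding mem_prod_cl by blast
    then show "U \<inter> Bp \<noteq> {}" unfolding Bp_def by blast
  qed
  then have "\<phi> p x \<in> v (\<phi> p ` Bp)" using p(2) BpX unfolding cont_maps_def cl_cont_def by blast
  moreover have "\<phi> p ` Bp \<subseteq> ?ev ` B"
  proof
    fix y assume "y \<in> \<phi> p ` Bp"
    then obtain x' where "(p, x') \<in> B" "y = \<phi> p x'" unfolding Bp_def by blast
    then show "y \<in> ?ev ` B" using rev_image_eqI[of "(p, x')" B y ?ev] by simp
  qed
  then have "v (\<phi> p ` Bp) \<subseteq> v (?ev ` B)"
    by (rule cech_closure_mono[OF cY]) (use ev B in blast)
  ultimately show "?ev (p, x) \<in> v (?ev ` B)" by auto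
qed

section \<open>The test space at a point\<close>

definition nhds_image_space ::
    "'z set \<Rightarrow> ('z set \<Rightarrow> 'z set) \<Rightarrow> 'z \<Rightarrow> ('z \<Rightarrow> 'f) \<Rightarrow> 'f option topology" where
  "nhds_image_space Z w z h = filter_space (h ` Z) (filtermap h (cl_nhds Z w z))"

lemma topspace_nhds_image_space:
  "topspace (nhds_image_space Z w z h) = insert None (Some ` h ` Z)"
  unfolding nhds_image_space_def topspace_filter_space ..

lemma case_option_image_nhds_image_space:
  "z \<in> Z \<Longrightarrow> case_option (h z) id ` topspace (nhds_image_space Z w z h) = h ` Z"
  unfolding topspace_nhds_image_space by (simp add: image_image insert_absorb)

lemma eval_image_nhds_image_space_subset:
  assumes "h ` Z \<subseteq> cont_maps X u Y v" and "z \<in> Z"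
  shows "(\<lambda>(p, x). case_option (h z) id p x) ` (topspace (nhds_image_space Z w z h) \<times> X) \<subseteq> Y"
  by (rule eval_image_subset[where u = u and v = v])
    (simp add: case_option_image_nhds_image_space[OF assms(2)] assms(1))

lemma at_most_one_nonisolated_nhds_image_space:
  "at_most_one_nonisolated (nhds_image_space Z w z h)"
  unfolding nhds_image_space_def by (rule at_most_one_nonisolated_filter_space)

lemma closure_of_nhds_image_space:
  assumes "cech_closure Z w" "z \<in> Z" "S \<subseteq> topspace (nhds_image_space Z w z h)"
  shows "p \<in> nhds_image_space Z w z h closure_of S \<longleftrightarrow>
           p \<in> S \<or> p = None \<and> z \<in> w {a \<in> Z. Some (h a) \<in> S}"
proof (cases p)
  case None
  have "(\<exists>\<^sub>F a in cl_nhds Z w z. h a \<in> h ` Z \<and> Some (h a) \<in> S) \<longleftrightarrow>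
        (\<exists>\<^sub>F a in cl_nhds Z w z. a \<in> {a \<in> Z. Some (h a) \<in> S})"
    by (rule frequently_cong[OF eventually_in_carrier_cl_nhds[OF assms(1,2)]]) auto
  also have "\<dots> \<longleftrightarrow> z \<in> w {a \<in> Z. Some (h a) \<in> S}"
    using in_cech_closure_iff_frequently[OF assms(1) _ assms(2)] by simp
  finally show ?thesis
    unfolding None nhds_image_space_def None_in_closure_of_filter_space frequently_filtermap by simp
next
  case (Some f)
  with assms(3) show ?thesis
    unfolding Some nhds_image_space_def Some_in_closure_of_filter_space topspace_filter_space by auto
qed

lemma cl_nbhd_None_nhds_image_space:
  assumes "cech_closure Z w" "z \<in> Z" "N \<subseteq> topspace (nhds_image_space Z w z h)"
  shows "cl_nbhd (topspace (nhds_image_space Z w z h)) ((closure_of) (nhds_image_space Z w z h)) None N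
           \<longleftrightarrow> None \<in> N \<and> (\<exists>W. cl_nbhd Z w z W \<and> Some ` h ` W \<subseteq> N)"
proof -
  have "(\<forall>\<^sub>F a in cl_nhds Z w z. h a \<in> h ` Z \<longrightarrow> Some (h a) \<in> N) \<longleftrightarrow>
        (\<exists>W. cl_nbhd Z w z W \<and> Some ` h ` W \<subseteq> N)"
    unfolding eventually_cl_nhds[OF assms(1,2)]
  proof safe
    fix W assume "cl_nbhd Z w z W" "\<forall>a\<in>W. h a \<in> h ` Z \<longrightarrow> Some (h a) \<in> N"
    moreover from this(1) have "W \<subseteq> Z" unfolding cl_nbhd_def by blast
    ultimately show "\<exists>W. cl_nbhd Z w z W \<and> Some ` h ` W \<subseteq> N" by blast
  qed blast
  moreover have "N \<subseteq> insert None (Some ` h ` Z)"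
    using assms(3) unfolding topspace_nhds_image_space .
  ultimately show ?thesis
    unfolding nhds_image_space_def cl_nbhd_None_filter_space openin_filter_space eventually_filtermap
    by blast
qed

lemma cl_cont_at_if_cl_cont_nhds_image_space:
  assumes cZ: "cech_closure Z w" and z: "z \<in> Z"
    and cont: "cl_cont (topspace (nhds_image_space Z w z h)) ((closure_of) (nhds_image_space Z w z h))
                 M \<sigma> (case_option (h z) id)"
  shows "cl_cont_at Z w \<sigma> h z"
  unfolding cl_cont_at_def
proof (intro allI impI)
  fix A assume A: "A \<subseteq> Z" "z \<in> w A"
  have S: "Some ` h ` A \<subseteq> topspace (nhds_image_space Z w z h)"
    using A(1) unfolding topspace_nhds_image_space by blast
  have "A \<subseteq> {a \<in> Z. Some (h a) \<in> Some ` h ` A}" using A(1) by blast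
  then have "z \<in> w {a \<in> Z. Some (h a) \<in> Some ` h ` A}"
    using cech_closure_mono[OF cZ] A(2) by blast
  then have "None \<in> nhds_image_space Z w z h closure_of (Some ` h ` A)"
    unfolding closure_of_nhds_image_space[OF cZ z S] by blast
  with cont S have "case_option (h z) id None \<in> \<sigma> (case_option (h z) id ` Some ` h ` A)"
    unfolding cl_cont_def by blast
  then show "h z \<in> \<sigma> (h ` A)" by (simp add: image_image)
qed

lemma cl_cont_nhds_image_space_if_cl_cont_at:
  assumes cZ: "cech_closure Z w" and cM: "cech_closure M \<sigma>" and hZ: "h ` Z \<subseteq> M" and z: "z \<in> Z"
    and at: "cl_cont_at Z w \<sigma> h z"
  defines "T \<equiv> nhds_image_space Z w z h"
  shows "cl_cont (topspace T) ((closure_of) T) M \<sigma> (case_option (h z) id)"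
  unfolding cl_cont_def
proof (intro conjI allI impI)
  let ?\<phi> = "case_option (h z) id"
  show \<phi>T: "?\<phi> ` topspace T \<subseteq> M"
    unfolding T_def case_option_image_nhds_image_space[OF z] by (rule hZ)
  fix S assume S: "S \<subseteq> topspace T"
  have \<phi>S: "?\<phi> ` S \<subseteq> M" using S \<phi>T by blast
  show "?\<phi> ` (T closure_of S) \<subseteq> \<sigma> (?\<phi> ` S)"
  proof
    fix y assume "y \<in> ?\<phi> ` (T closure_of S)"
    then obtain p where p: "p \<in> T closure_of S" and y: "y = ?\<phi> p" by blast
    define A where "A = {a \<in> Z. Some (h a) \<in> S}"
    from p consider "p \<in> S" | "p = None" "z \<in> w A"
      unfolding A_def T_def closure_of_nhds_image_space[OF cZ z S[unfolded T_def]] by blast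
    then show "y \<in> \<sigma> (?\<phi> ` S)"
    proof cases
      case 1
      then show ?thesis using y cech_closure_extensive[OF cM \<phi>S] by blast
    next
      case 2
      have "h ` A \<subseteq> ?\<phi> ` S"
      proof
        fix b assume "b \<in> h ` A"
        then obtain a where "Some (h a) \<in> S" "b = h a" unfolding A_def by blast
        then show "b \<in> ?\<phi> ` S" using rev_image_eqI[of "Some (h a)" S b ?\<phi>] by simp
      qed
      then have "\<sigma> (h ` A) \<subseteq> \<sigma> (?\<phi> ` S)" by (rule cech_closure_mono[OF cM _ \<phi>S])
      moreover have "A \<subseteq> Z" unfolding A_def by blast
      then have "h z \<in> \<sigma> (h ` A)" using at 2(2) unfolding cl_cont_at_def by blast
      ultimately show ?thesis using y 2(1) by auto
    qed
  qed
qed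

lemma cl_cont_nhds_image_space_iff:
  assumes "cech_closure Z w" and "cech_closure M \<sigma>" and "h ` Z \<subseteq> M" and "z \<in> Z"
  shows "cl_cont (topspace (nhds_image_space Z w z h)) ((closure_of) (nhds_image_space Z w z h))
           M \<sigma> (case_option (h z) id) \<longleftrightarrow> cl_cont_at Z w \<sigma> h z"
  using cl_cont_at_if_cl_cont_nhds_image_space[OF assms(1,4)]
    cl_cont_nhds_image_space_if_cl_cont_at[OF assms] by blast

lemma prod_cl_None_nhds_image_space_pullback:
  assumes cZ: "cech_closure Z w" and z: "z \<in> Z"
    and Nx: "(None, x) \<in> prod_cl (topspace (nhds_image_space Z w z h))
                            ((closure_of) (nhds_image_space Z w z h)) X u B"
  shows "(z, x) \<in> prod_cl Z w X u {(a, x'). a \<in> Z \<and> ((Some (h a), x') \<in> B \<or> a = z \<and> (None, x') \<in> B)}"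
  unfolding mem_prod_cl
proof (intro conjI allI impI notI z)
  show x: "x \<in> X" using Nx unfolding mem_prod_cl by blast
  fix W U
  assume W: "cl_nbhd Z w z W" and U: "cl_nbhd X u x U"
    and disj: "W \<times> U \<inter> {(a, x'). a \<in> Z \<and> ((Some (h a), x') \<in> B \<or> a = z \<and> (None, x') \<in> B)} = {}"
  have "W \<subseteq> Z" using W unfolding cl_nbhd_def by blast
  then have NW: "insert None (Some ` h ` W) \<subseteq> topspace (nhds_image_space Z w z h)"
    unfolding topspace_nhds_image_space by blast
  have "cl_nbhd (topspace (nhds_image_space Z w z h)) ((closure_of) (nhds_image_space Z w z h))
          None (insert None (Some ` h ` W))"
    unfolding cl_nbhd_None_nhds_image_space[OF cZ z NW] using W by blast
  with Nx U obtain q x' where q: "q \<in> insert None (Some ` h ` W)" "x' \<in> U" "(q, x') \<in> B"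
    unfolding mem_prod_cl by blast
  then consider "q = None" | a where "a \<in> W" "q = Some (h a)" by blast
  then show False
  proof cases
    case 1
    with q disj mem_cl_nbhd[OF cZ W] z show False by blast
  next
    case 2
    with q disj \<open>W \<subseteq> Z\<close> show False by blast
  qed
qed

lemma prod_cl_None_nhds_image_space_pushforward:
  assumes cZ: "cech_closure Z w" and z: "z \<in> Z" and zx: "(z, x) \<in> prod_cl Z w X u B"
  shows "(None, x) \<in> prod_cl (topspace (nhds_image_space Z w z h))
                      ((closure_of) (nhds_image_space Z w z h)) X u ((\<lambda>(a, x'). (Some (h a), x')) ` B)"
  unfolding mem_prod_cl
proof (intro conjI allI impI)
  show "None \<in> topspace (nhds_image_space Z w z h)" unfolding topspace_nhds_image_space by blast
  show "x \<in> X" using zx unfolding mem_prod_cl by blast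
  fix N U
  assume N: "cl_nbhd (topspace (nhds_image_space Z w z h)) ((closure_of) (nhds_image_space Z w z h)) None N"
    and U: "cl_nbhd X u x U"
  then have "N \<subseteq> topspace (nhds_image_space Z w z h)" unfolding cl_nbhd_def by blast
  with N obtain W where W: "cl_nbhd Z w z W" "Some ` h ` W \<subseteq> N"
    unfolding cl_nbhd_None_nhds_image_space[OF cZ z \<open>N \<subseteq> _\<close>] by blast
  from zx W(1) U obtain a x' where "a \<in> W" "x' \<in> U" "(a, x') \<in> B"
    unfolding mem_prod_cl by blast
  moreover from \<open>(a, x') \<in> B\<close> have "(Some (h a), x') \<in> (\<lambda>(a, x'). (Some (h a), x')) ` B"
    by (rule rev_image_eqI) simp
  ultimately have "(Some (h a), x') \<in> N \<times> U \<inter> (\<lambda>(a, x'). (Some (h a), x')) ` B" using W(2) by blast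
  then show "N \<times> U \<inter> (\<lambda>(a, x'). (Some (h a), x')) ` B \<noteq> {}" by blast
qed

lemma cl_cont_at_eval_None:
  assumes cZ: "cech_closure Z w" and cY: "cech_closure Y v" and z: "z \<in> Z"
    and hZ: "gstar X g ` Z \<subseteq> cont_maps X u Y v"
    and g: "cl_cont_at (Z \<times> X) (prod_cl Z w X u) v g (z, x)"
  defines "T \<equiv> nhds_image_space Z w z (gstar X g)"
    and "ev \<equiv> \<lambda>(p, x). case_option (gstar X g z) id p x"
  shows "cl_cont_at (topspace T \<times> X) (prod_cl (topspace T) ((closure_of) T) X u) v ev (None, x)"
  unfolding cl_cont_at_def
proof (intro allI impI)
  fix B assume B: "B \<subseteq> topspace T \<times> X" and Nx: "(None, x) \<in> prod_cl (topspace T) ((closure_of) T) X u B"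
  define B' where
    "B' = {(a, x'). a \<in> Z \<and> ((Some (gstar X g a), x') \<in> B \<or> a = z \<and> (None, x') \<in> B)}"
  have B': "B' \<subseteq> Z \<times> X" using B unfolding B'_def by blast
  have "(z, x) \<in> prod_cl Z w X u B'"
    unfolding B'_def by (rule prod_cl_None_nhds_image_space_pullback[OF cZ z Nx[unfolded T_def]])
  with g B' have gz: "g (z, x) \<in> v (g ` B')" unfolding cl_cont_at_def by blast
  have "g ` B' \<subseteq> ev ` B"
  proof
    fix y assume "y \<in> g ` B'"
    then obtain a x' where ax: "(a, x') \<in> B'" "y = g (a, x')" by (metis imageE surj_pair)
    then have "x' \<in> X" using B' by blast
    from ax consider "(Some (gstar X g a), x') \<in> B" | "a = z" "(None, x') \<in> B"
      unfolding B'_def by blast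
    then show "y \<in> ev ` B"
    proof cases
      case 1
      then show ?thesis
        using rev_image_eqI[of "(Some (gstar X g a), x')" B y ev] ax \<open>x' \<in> X\<close>
        by (simp add: ev_def gstar_apply)
    next
      case 2
      then show ?thesis
        using rev_image_eqI[of "(None, x')" B y ev] ax \<open>x' \<in> X\<close>
        by (simp add: ev_def gstar_apply)
    qed
  qed
  moreover have "ev ` B \<subseteq> Y"
    using eval_image_nhds_image_space_subset[OF hZ z] B unfolding ev_def T_def by blast
  ultimately have "v (g ` B') \<subseteq> v (ev ` B)" by (rule cech_closure_mono[OF cY])
  moreover have "ev (None, x) = g (z, x)"
    using Nx unfolding mem_prod_cl by (simp add: ev_def gstar_apply)
  ultimately show "ev (None, x) \<in> v (ev ` B)" using gz by (metis subsetD)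
qed

lemma cl_cont_at_if_eval_None:
  fixes Z :: "'z set" and w z and X :: "'x set" and g :: "'z \<times> 'x \<Rightarrow> 'y"
  defines "T \<equiv> nhds_image_space Z w z (gstar X g)"
    and "ev \<equiv> \<lambda>(p, x). case_option (gstar X g z) id p x"
  assumes cZ: "cech_closure Z w" and z: "z \<in> Z"
    and ev: "cl_cont_at (topspace T \<times> X) (prod_cl (topspace T) ((closure_of) T) X u) v ev (None, x)"
  shows "cl_cont_at (Z \<times> X) (prod_cl Z w X u) v g (z, x)"
  unfolding cl_cont_at_def
proof (intro allI impI)
  fix B assume B: "B \<subseteq> Z \<times> X" and zx: "(z, x) \<in> prod_cl Z w X u B"
  define B'' where "B'' = (\<lambda>(a, x'). (Some (gstar X g a), x')) ` B"
  have "B'' \<subseteq> topspace T \<times> X"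
    using B unfolding B''_def T_def topspace_nhds_image_space by auto
  moreover have "(None, x) \<in> prod_cl (topspace T) ((closure_of) T) X u B''"
    unfolding T_def B''_def by (rule prod_cl_None_nhds_image_space_pushforward[OF cZ z zx])
  ultimately have "ev (None, x) \<in> v (ev ` B'')" using ev unfolding cl_cont_at_def by blast
  moreover have "ev ` B'' = g ` B"
    unfolding B''_def image_image using B by (intro image_cong) (auto simp: ev_def gstar_apply)
  moreover have "ev (None, x) = g (z, x)"
    using zx unfolding mem_prod_cl by (simp add: ev_def gstar_apply)
  ultimately show "g (z, x) \<in> v (g ` B)" by simp
qed

lemma cl_cont_eval_nhds_image_space_iff:
  fixes Z :: "'z set" and w z and X :: "'x set" and g :: "'z \<times> 'x \<Rightarrow> 'y"
  defines "T \<equiv> nhds_image_space Z w z (gstar X g)"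
    and "ev \<equiv> \<lambda>(p, x). case_option (gstar X g z) id p x"
  assumes cZ: "cech_closure Z w" and cX: "cech_closure X u" and cY: "cech_closure Y v"
    and z: "z \<in> Z" and hZ: "gstar X g ` Z \<subseteq> cont_maps X u Y v"
  shows "cl_cont (topspace T \<times> X) (prod_cl (topspace T) ((closure_of) T) X u) Y v ev \<longleftrightarrow>
           (\<forall>x\<in>X. cl_cont_at (Z \<times> X) (prod_cl Z w X u) v g (z, x))"
proof -
  have \<phi>T: "case_option (gstar X g z) id ` topspace T \<subseteq> cont_maps X u Y v"
    unfolding T_def case_option_image_nhds_image_space[OF z] by (rule hZ)
  have evT: "ev ` (topspace T \<times> X) \<subseteq> Y"
    unfolding ev_def T_def by (rule eval_image_nhds_image_space_subset[OF hZ z])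
  have Some_at:
    "cl_cont_at (topspace T \<times> X) (prod_cl (topspace T) ((closure_of) T) X u) v ev (Some f, x)"
    if "Some f \<in> topspace T" for f x
  proof -
    have "f \<in> gstar X g ` Z" using that unfolding T_def topspace_nhds_image_space by blast
    then have "openin T {Some f}" unfolding T_def nhds_image_space_def by (rule openin_filter_space_Some)
    moreover have "case_option (gstar X g z) id (Some f) \<in> cont_maps X u Y v" using \<phi>T that by blast
    ultimately show ?thesis
      unfolding ev_def by (rule cl_cont_at_eval_isolated[OF cX cY _ _ evT[unfolded ev_def]])
  qed
  have pointwise:
    "(\<forall>q\<in>topspace T \<times> X. cl_cont_at (topspace T \<times> X) (prod_cl (topspace T) ((closure_of) T) X u) v ev q)
       \<longleftrightarrow> (\<forall>x\<in>X. cl_cont_at (Z \<times> X) (prod_cl Z w X u) v g (z, x))"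
  proof safe
    fix x
    assume "\<forall>q\<in>topspace T \<times> X.
              cl_cont_at (topspace T \<times> X) (prod_cl (topspace T) ((closure_of) T) X u) v ev q"
      and "x \<in> X"
    moreover have "None \<in> topspace T" unfolding T_def topspace_nhds_image_space by blast
    ultimately show "cl_cont_at (Z \<times> X) (prod_cl Z w X u) v g (z, x)"
      unfolding T_def ev_def by (intro cl_cont_at_if_eval_None[OF cZ z]) blast
  next
    fix p x assume "\<forall>x\<in>X. cl_cont_at (Z \<times> X) (prod_cl Z w X u) v g (z, x)" "p \<in> topspace T" "x \<in> X"
    then show "cl_cont_at (topspace T \<times> X) (prod_cl (topspace T) ((closure_of) T) X u) v ev (p, x)"
      using Some_at cl_cont_at_eval_None[OF cZ cY z hZ] unfolding T_def ev_def by (cases p) auto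
  qed
  show ?thesis unfolding cl_cont_prod_iff_cl_cont_at pointwise by (simp add: evT)
qed

lemma gstar_eval: "\<phi> p \<in> extensional X \<Longrightarrow> gstar X (\<lambda>(q, x). \<phi> q x) p = \<phi> p"
  by (simp add: gstar_def extensional_restrict)

lemma gstar_image_extensional: "gstar X g ` Z \<subseteq> extensional X"
  by (auto simp: gstar_def)

lemma gstar_eval_nhds_image_space:
  assumes "h ` Z \<subseteq> extensional X" and "z \<in> Z" and "p \<in> topspace (nhds_image_space Z w z h)"
  shows "gstar X (\<lambda>(q, x). case_option (h z) id q x) p = case_option (h z) id p"
proof (rule gstar_eval)
  show "case_option (h z) id p \<in> extensional X"
    using assms unfolding topspace_nhds_image_space by auto
qed

lemma gstar_eval_image_nhds_image_space:
  assumes "h ` Z \<subseteq> extensional X" and "z \<in> Z"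
  shows "gstar X (\<lambda>(q, x). case_option (h z) id q x) ` topspace (nhds_image_space Z w z h) = h ` Z"
proof -
  from gstar_eval_nhds_image_space[OF assms] show ?thesis
    by (simp add: case_option_image_nhds_image_space[OF assms(2)] cong: image_cong)
qed

lemma cl_cont_gstar_eval_nhds_image_space_iff:
  assumes "h ` Z \<subseteq> extensional X" and "z \<in> Z"
  shows "cl_cont (topspace (nhds_image_space Z w z h)) ((closure_of) (nhds_image_space Z w z h)) M \<sigma>
           (gstar X (\<lambda>(p, x). case_option (h z) id p x)) \<longleftrightarrow>
         cl_cont (topspace (nhds_image_space Z w z h)) ((closure_of) (nhds_image_space Z w z h)) M \<sigma>
           (case_option (h z) id)"
  by (rule cl_cont_cong[OF gstar_eval_nhds_image_space[OF assms] closure_of_subset_topspace])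

section \<open>Properness and admissibility\<close>

lemma proper_test_if_proper:
  assumes "proper TYPE('z) X u Y v \<sigma>"
  shows "proper_test TYPE('z) X u Y v \<sigma>"
  unfolding proper_test_def
  using assms[unfolded proper_def, rule_format, OF cech_closure_topology] by blast

lemma admissible_test_if_admissible:
  assumes "admissible TYPE('z) X u Y v \<sigma>"
  shows "admissible_test TYPE('z) X u Y v \<sigma>"
  unfolding admissible_test_def
  using assms[unfolded admissible_def, rule_format, OF cech_closure_topology] by blast

lemma proper_if_proper_test:
  fixes X :: "'x set" and Y :: "'y set"
  assumes cX: "cech_closure X u" and cY: "cech_closure Y v"
    and cM: "cech_closure (cont_maps X u Y v) \<sigma>"
    and test: "proper_test TYPE(('x \<Rightarrow> 'y) option) X u Y v \<sigma>"
  shows "proper TYPE('z) X u Y v \<sigma>"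
  unfolding proper_def
proof (intro allI impI)
  fix Z :: "'z set" and w g
  assume cZ: "cech_closure Z w" and g: "cl_cont (Z \<times> X) (prod_cl Z w X u) Y v g"
  have hZ: "gstar X g ` Z \<subseteq> cont_maps X u Y v" using gstar_in_cont_maps[OF cZ cX g] by blast
  have at: "cl_cont_at Z w \<sigma> (gstar X g) z" if z: "z \<in> Z" for z
  proof -
    let ?T = "nhds_image_space Z w z (gstar X g)"
    have "\<forall>x\<in>X. cl_cont_at (Z \<times> X) (prod_cl Z w X u) v g (z, x)"
      using g z unfolding cl_cont_prod_iff_cl_cont_at by blast
    then have "cl_cont (topspace ?T \<times> X) (prod_cl (topspace ?T) ((closure_of) ?T) X u) Y v
                 (\<lambda>(p, x). case_option (gstar X g z) id p x)"
      unfolding cl_cont_eval_nhds_image_space_iff[OF cZ cX cY z hZ] .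
    then have "cl_cont (topspace ?T) ((closure_of) ?T) (cont_maps X u Y v) \<sigma>
                 (gstar X (\<lambda>(p, x). case_option (gstar X g z) id p x))"
      by (rule test[unfolded proper_test_def, rule_format, OF at_most_one_nonisolated_nhds_image_space])
    then show ?thesis
      unfolding cl_cont_gstar_eval_nhds_image_space_iff[OF gstar_image_extensional z]
        cl_cont_nhds_image_space_iff[OF cZ cM hZ z] .
  qed
  show "cl_cont Z w (cont_maps X u Y v) \<sigma> (gstar X g)"
    unfolding cech_cl_cont_iff_cl_cont_at[OF cZ] using hZ at by simp
qed

lemma admissible_if_admissible_test:
  fixes X :: "'x set" and Y :: "'y set"
  assumes cX: "cech_closure X u" and cY: "cech_closure Y v"
    and cM: "cech_closure (cont_maps X u Y v) \<sigma>"
    and test: "admissible_test TYPE(('x \<Rightarrow> 'y) option) X u Y v \<sigma>"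
  shows "admissible TYPE('z) X u Y v \<sigma>"
  unfolding admissible_def
proof (intro allI impI)
  fix Z :: "'z set" and w g
  assume cZ: "cech_closure Z w" and hZ: "gstar X g ` Z \<subseteq> cont_maps X u Y v"
    and h: "cl_cont Z w (cont_maps X u Y v) \<sigma> (gstar X g)"
  have at: "cl_cont_at (Z \<times> X) (prod_cl Z w X u) v g (z, x)" if z: "z \<in> Z" and x: "x \<in> X" for z x
  proof -
    let ?T = "nhds_image_space Z w z (gstar X g)"
    have "cl_cont_at Z w \<sigma> (gstar X g) z"
      using h z unfolding cech_cl_cont_iff_cl_cont_at[OF cZ] by blast
    then have "cl_cont (topspace ?T) ((closure_of) ?T) (cont_maps X u Y v) \<sigma>
                 (gstar X (\<lambda>(p, x). case_option (gstar X g z) id p x))"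
      unfolding cl_cont_gstar_eval_nhds_image_space_iff[OF gstar_image_extensional z]
        cl_cont_nhds_image_space_iff[OF cZ cM hZ z] .
    moreover have "gstar X (\<lambda>(p, x). case_option (gstar X g z) id p x) ` topspace ?T \<subseteq> cont_maps X u Y v"
      unfolding gstar_eval_image_nhds_image_space[OF gstar_image_extensional z] by (rule hZ)
    ultimately have "cl_cont (topspace ?T \<times> X) (prod_cl (topspace ?T) ((closure_of) ?T) X u) Y v
                 (\<lambda>(p, x). case_option (gstar X g z) id p x)"
      by (rule test[unfolded admissible_test_def, rule_format, OF at_most_one_nonisolated_nhds_image_space, rotated])
    then show ?thesis
      unfolding cl_cont_eval_nhds_image_space_iff[OF cZ cX cY z hZ] using x by blast
  qed
  show "cl_cont (Z \<times> X) (prod_cl Z w X u) Y v g"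
    unfolding cl_cont_prod_iff_cl_cont_at using image_subset_if_gstar_image_subset[OF hZ] at by auto
qed

theorem corollary3:
  fixes X :: "'x set" and u :: "'x set \<Rightarrow> 'x set"
    and Y :: "'y set" and v :: "'y set \<Rightarrow> 'y set"
    and \<sigma> :: "('x \<Rightarrow> 'y) set \<Rightarrow> ('x \<Rightarrow> 'y) set"
  assumes "cech_closure X u" and "cech_closure Y v"
    and "cech_closure (cont_maps X u Y v) \<sigma>"
  shows "((proper TYPE('z) X u Y v \<sigma> \<longrightarrow> proper_test TYPE('z) X u Y v \<sigma>) \<and>
         (proper_test TYPE(('x \<Rightarrow> 'y) option) X u Y v \<sigma> \<longrightarrow> proper TYPE('z) X u Y v \<sigma>)) \<and>
         ((admissible TYPE('z) X u Y v \<sigma> \<longrightarrow> admissible_test TYPE('z) X u Y v \<sigma>) \<and>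
         (admissible_test TYPE(('x \<Rightarrow> 'y) option) X u Y v \<sigma> \<longrightarrow> admissible TYPE('z) X u Y v \<sigma>))"
  using proper_test_if_proper proper_if_proper_test[OF assms]
    admissible_test_if_admissible admissible_if_admissible_test[OF assms]
  by blast

end
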